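(* Let $N$ be a positive even integer and $\alpha,\beta$ real; put $\sigma=\alpha+\beta$. Define the rational functions $$E_1(x)=\frac{(x+3-\alpha+\beta)(x+3-\sigma)(x-1-2N+\sigma)}{4(x+1)(x+3)},\qquad E_2(x)=-\frac{(x-1+\sigma)(x-1+\alpha-\beta)(x-1+2N-\sigma)}{4(x-1)(x-3)},$$ $$G_1(x)=\frac{(\alpha^2-\beta^2)(x+\sigma-2N-1)}{(x^2-1)(x+3)},\qquad G_2(x)=\frac{(2N+2-\sigma)\big((x+\alpha-1)^2-\beta^2\big)}{(x^2-1)(x-3)},$$ and the operator $$(Hf)(x)=E_1(x)\big(f(x+4)-f(x)\big)+E_2(x)\big(f(x-4)-f(x)\big)+G_1(x)\big(f(-x-2)-f(x)\big)+G_2(x)\big(f(-x+2)-f(x)\big).$$ Then for every $n\in\{0,1,\dots,N\}$ the monic dual $-1$ Hahn polynomial $P_n$ satisfies $(HP_n)(x)=2n\,P_n(x)$ for all $x\notin\{\pm1,\pm3\}$ (in particular $HP_n$ is a polynomial of degree $n$).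
   Context: For $N$ even: $b_n^{(-1)}=2N+1-\sigma$ for $n$ even, $b_n^{(-1)}=-2N-3+\sigma$ for $n$ odd; $u_n^{(-1)}=4n(\alpha-n)$ for $n$ even, $u_n^{(-1)}=4(N-n+1)(n+\beta-N-1)$ for $n$ odd. The monic dual $-1$ Hahn polynomials are defined by $P_{-1}=0$, $P_0=1$, $P_{n+1}(x)=(x-b_n^{(-1)})P_n(x)-u_n^{(-1)}P_{n-1}(x)$ for $n\ge0$. *)

theory Defs
  imports Complex_Main "HOL-Computational_Algebra.Polynomial"
begin

text \<open>Recurrence coefficients of the dual -1 Hahn polynomials, case N even;
  sigma = alpha + beta.\<close>

definition hb :: "nat \<Rightarrow> real \<Rightarrow> real \<Rightarrow> nat \<Rightarrow> real" where
  "hb N \<alpha> \<beta> n = (if even n then 2 * real N + 1 - (\<alpha> + \<beta>)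
                     else - 2 * real N - 3 + (\<alpha> + \<beta>))"

definition hu :: "nat \<Rightarrow> real \<Rightarrow> real \<Rightarrow> nat \<Rightarrow> real" where
  "hu N \<alpha> \<beta> n = (if even n then 4 * real n * (\<alpha> - real n)
                     else 4 * (real N - real n + 1) * (real n + \<beta> - real N - 1))"

fun hahnP :: "nat \<Rightarrow> real \<Rightarrow> real \<Rightarrow> nat \<Rightarrow> real poly" where
  "hahnP N \<alpha> \<beta> 0 = 1"
| "hahnP N \<alpha> \<beta> (Suc 0) = [:- hb N \<alpha> \<beta> 0, 1:]"
| "hahnP N \<alpha> \<beta> (Suc (Suc n)) =
     [:- hb N \<alpha> \<beta> (Suc n), 1:] * hahnP N \<alpha> \<beta> (Suc n)
     - smult (hu N \<alpha> \<beta> (Suc n)) (hahnP N \<alpha> \<beta> n)"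

definition E1 :: "nat \<Rightarrow> real \<Rightarrow> real \<Rightarrow> real \<Rightarrow> real" where
  "E1 N \<alpha> \<beta> x = (x + 3 - \<alpha> + \<beta>) * (x + 3 - (\<alpha> + \<beta>)) * (x - 1 - 2 * real N + (\<alpha> + \<beta>))
                   / (4 * (x + 1) * (x + 3))"

definition E2 :: "nat \<Rightarrow> real \<Rightarrow> real \<Rightarrow> real \<Rightarrow> real" where
  "E2 N \<alpha> \<beta> x = - ((x - 1 + (\<alpha> + \<beta>)) * (x - 1 + \<alpha> - \<beta>) * (x - 1 + 2 * real N - (\<alpha> + \<beta>))
                   / (4 * (x - 1) * (x - 3)))"

definition G1 :: "nat \<Rightarrow> real \<Rightarrow> real \<Rightarrow> real \<Rightarrow> real" where
  "G1 N \<alpha> \<beta> x = (\<alpha>\<^sup>2 - \<beta>\<^sup>2) * (x + (\<alpha> + \<beta>) - 2 * real N - 1) / ((x\<^sup>2 - 1) * (x + 3))"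

definition G2 :: "nat \<Rightarrow> real \<Rightarrow> real \<Rightarrow> real \<Rightarrow> real" where
  "G2 N \<alpha> \<beta> x = (2 * real N + 2 - (\<alpha> + \<beta>)) * ((x + \<alpha> - 1)\<^sup>2 - \<beta>\<^sup>2) / ((x\<^sup>2 - 1) * (x - 3))"

definition hahnH :: "nat \<Rightarrow> real \<Rightarrow> real \<Rightarrow> (real \<Rightarrow> real) \<Rightarrow> real \<Rightarrow> real" where
  "hahnH N \<alpha> \<beta> f x =
     E1 N \<alpha> \<beta> x * (f (x + 4) - f x) + E2 N \<alpha> \<beta> x * (f (x - 4) - f x)
   + G1 N \<alpha> \<beta> x * (f (- x - 2) - f x) + G2 N \<alpha> \<beta> x * (f (- x + 2) - f x)"

end

theory Submission
  imports Defs "HOL-Library.Groups_Big_Fun"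
begin

text \<open>
  Each of the four terms of \<open>H\<close> is a difference operator \<open>f \<mapsto> c(x) (f(\<phi> x) - f x)\<close> with
  \<open>\<phi> x \<in> {x + 4, x - 4, -x - 2, -x + 2}\<close>, and the graphs of these \<open>\<phi>\<close> lie on the curve \<open>Q(x, y) = 0\<close>,
  \<open>Q(x, y) = (y - x)((y - x)\<^sup>2 - 16)((y + x)\<^sup>2 - 4)\<close>. Hence \<open>\<Sum> Q\<^sub>a\<^sub>b x\<^sup>a H(y\<^sup>b f) = 0\<close> for every
  function \<open>f\<close>. On the other side, let \<open>J\<close> be the Jacobi matrix of the recurrence, so that
  multiplication by \<open>x\<close> acts on coefficient vectors in the basis \<open>P\<^sub>i\<close> as \<open>J\<close>, and let
  \<open>D = diag(2i)\<close>; a direct computation shows \<open>\<Sum> Q\<^sub>a\<^sub>b J\<^sup>a D J\<^sup>b = 0\<close>. As \<open>Q\<close> is monic of degree 5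
  in \<open>y\<close>, both relations determine \<open>H(x\<^sup>5 P\<^sub>m)\<close>, respectively \<open>D J\<^sup>5 e\<^sub>m\<close>, from the lower powers.
  So if \<open>H P\<^sub>i = 2i P\<^sub>i\<close> for \<open>i < m + 5\<close>, then \<open>H\<close> acts as \<open>D\<close> on \<open>x\<^sup>5 P\<^sub>m = P\<^sub>m\<^sub>+\<^sub>5 + (lower terms)\<close>,
  which gives \<open>H P\<^sub>m\<^sub>+\<^sub>5 = 2(m + 5) P\<^sub>m\<^sub>+\<^sub>5\<close>. The cases \<open>n \<le> 4\<close> are checked directly.
\<close>

section \<open>A quintic relation satisfied by the operator\<close>

definition quintic :: "real \<Rightarrow> real \<Rightarrow> real" where
  "quintic x y = (y - x) * ((y - x)\<^sup>2 - 16) * ((y + x)\<^sup>2 - 4)"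

definition quintic_lower :: "(real \<times> nat \<times> nat) list" where
  "quintic_lower = [(64, 0, 1), (-20, 0, 3), (-64, 1, 0), (-4, 1, 2), (-1, 1, 4), (4, 2, 1),
     (-2, 2, 3), (20, 3, 0), (2, 3, 2), (1, 4, 1), (-1, 5, 0)]"

lemma quintic_expansion:
  "quintic x y = y ^ 5 + (\<Sum>(c, a, b)\<leftarrow>quintic_lower. c * x ^ a * y ^ b)"
  by (simp add: quintic_def quintic_lower_def) algebra

lemma quintic_lower_degrees: "(c, a, b) \<in> set quintic_lower \<Longrightarrow> b \<le> 4 \<and> a + b \<le> 5"
  by (auto simp: quintic_lower_def)

lemma sum_mult_sum_list_swap:
  fixes g :: "nat \<Rightarrow> nat \<Rightarrow> 'i \<Rightarrow> real"
  shows "(\<Sum>i\<in>W. (\<Sum>(c, a, b)\<leftarrow>L. c * g a b i) * h i) = (\<Sum>(c, a, b)\<leftarrow>L. c * (\<Sum>i\<in>W. g a b i * h i))"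
  by (induction L) (auto simp: sum.distrib sum_distrib_left algebra_simps)

text \<open>
  \<open>Q(X, A)\<close> for two operators that need not commute: in the monomial \<open>x\<^sup>a y\<^sup>b\<close> the power of
  \<open>X\<close> coming from \<open>x\<close> is applied after \<open>A\<close>, the one coming from \<open>y\<close> before it.
\<close>

definition quintic_form ::
  "(('a \<Rightarrow> real) \<Rightarrow> 'a \<Rightarrow> real) \<Rightarrow> (('a \<Rightarrow> real) \<Rightarrow> 'a \<Rightarrow> real) \<Rightarrow> ('a \<Rightarrow> real) \<Rightarrow> 'a \<Rightarrow> real" where
  "quintic_form X A v i =
     A ((X ^^ 5) v) i + (\<Sum>(c, a, b)\<leftarrow>quintic_lower. c * (X ^^ a) (A ((X ^^ b) v)) i)"

definition times_x :: "(real \<Rightarrow> real) \<Rightarrow> real \<Rightarrow> real" where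
  "times_x f x = x * f x"

lemma funpow_times_x: "(times_x ^^ k) f x = x ^ k * f x"
  by (induction k arbitrary: x) (simp_all add: times_x_def)

lemma quintic_form_times_x:
  "quintic_form times_x A f x =
     A (\<lambda>y. y ^ 5 * f y) x + (\<Sum>(c, a, b)\<leftarrow>quintic_lower. c * x ^ a * A (\<lambda>y. y ^ b * f y) x)"
  by (simp add: quintic_form_def funpow_times_x[abs_def] mult.assoc)

lemma quintic_form_times_x_add:
  "quintic_form times_x (\<lambda>f x. A f x + B f x) g x = quintic_form times_x A g x + quintic_form times_x B g x"
  by (simp add: quintic_form_times_x quintic_lower_def algebra_simps)

definition diff_op :: "(real \<Rightarrow> real) \<Rightarrow> (real \<Rightarrow> real) \<Rightarrow> (real \<Rightarrow> real) \<Rightarrow> real \<Rightarrow> real" where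
  "diff_op c \<phi> f x = c x * (f (\<phi> x) - f x)"

lemma quintic_form_diff_op:
  "quintic_form times_x (diff_op c \<phi>) f x = c x * f (\<phi> x) * quintic x (\<phi> x)"
proof -
  have "quintic x x = 0"
    by (simp add: quintic_def)
  then show ?thesis
    unfolding quintic_form_times_x quintic_expansion
    by (simp add: diff_op_def quintic_lower_def) algebra
qed

lemma hahnH_eq_diff_ops:
  "hahnH N \<alpha> \<beta> = (\<lambda>f x. diff_op (E1 N \<alpha> \<beta>) (\<lambda>x. x + 4) f x + diff_op (E2 N \<alpha> \<beta>) (\<lambda>x. x - 4) f x
     + diff_op (G1 N \<alpha> \<beta>) (\<lambda>x. - x - 2) f x + diff_op (G2 N \<alpha> \<beta>) (\<lambda>x. - x + 2) f x)"
  by (simp add: fun_eq_iff hahnH_def diff_op_def)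

lemma quintic_form_hahnH: "quintic_form times_x (hahnH N \<alpha> \<beta>) f x = 0"
  unfolding hahnH_eq_diff_ops quintic_form_times_x_add quintic_form_diff_op
  by (simp add: quintic_def)

lemma hahnH_diff: "hahnH N \<alpha> \<beta> (\<lambda>y. f y - g y) x = hahnH N \<alpha> \<beta> f x - hahnH N \<alpha> \<beta> g x"
  by (simp add: hahnH_def algebra_simps)

lemma hahnH_lincomb:
  "hahnH N \<alpha> \<beta> (\<lambda>y. \<Sum>i\<in>S. c i * f i y) x = (\<Sum>i\<in>S. c i * hahnH N \<alpha> \<beta> (f i) x)"
  by (simp add: hahnH_def algebra_simps sum.distrib sum_subtractf sum_distrib_left)

lemma hahnH_times_denominator:
  assumes "x \<notin> {1, -1, 3, -3}"
  shows "hahnH N \<alpha> \<beta> f x * (4 * (x + 1) * (x - 1) * (x + 3) * (x - 3)) =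
    (x + 3 - \<alpha> + \<beta>) * (x + 3 - (\<alpha> + \<beta>)) * (x - 1 - 2 * real N + (\<alpha> + \<beta>)) * (x - 1) * (x - 3) * (f (x + 4) - f x)
  - (x - 1 + (\<alpha> + \<beta>)) * (x - 1 + \<alpha> - \<beta>) * (x - 1 + 2 * real N - (\<alpha> + \<beta>)) * (x + 1) * (x + 3) * (f (x - 4) - f x)
  + 4 * (\<alpha>\<^sup>2 - \<beta>\<^sup>2) * (x + (\<alpha> + \<beta>) - 2 * real N - 1) * (x - 3) * (f (- x - 2) - f x)
  + 4 * (2 * real N + 2 - (\<alpha> + \<beta>)) * ((x + \<alpha> - 1)\<^sup>2 - \<beta>\<^sup>2) * (x + 3) * (f (- x + 2) - f x)"
proof -
  let ?D = "4 * (x + 1) * (x - 1) * (x + 3) * (x - 3)"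
  have sq: "x\<^sup>2 - 1 = (x + 1) * (x - 1)"
    by algebra
  have nz: "4 * (x + 1) * (x + 3) \<noteq> 0" "4 * (x - 1) * (x - 3) \<noteq> 0"
    "(x\<^sup>2 - 1) * (x + 3) \<noteq> 0" "(x\<^sup>2 - 1) * (x - 3) \<noteq> 0"
    using assms unfolding sq by auto
  have scale: "A / B * D = A * C" if "B \<noteq> 0" "D = B * C" for A B C D :: real
    using that by simp
  have "E1 N \<alpha> \<beta> x * ?D = (x + 3 - \<alpha> + \<beta>) * (x + 3 - (\<alpha> + \<beta>)) * (x - 1 - 2 * real N + (\<alpha> + \<beta>)) * ((x - 1) * (x - 3))"
    unfolding E1_def by (rule scale[OF nz(1)]) algebra
  moreover have "E2 N \<alpha> \<beta> x * ?D = - ((x - 1 + (\<alpha> + \<beta>)) * (x - 1 + \<alpha> - \<beta>) * (x - 1 + 2 * real N - (\<alpha> + \<beta>))) * ((x + 1) * (x + 3))"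
    unfolding E2_def minus_divide_left by (rule scale[OF nz(2)]) algebra
  moreover have "G1 N \<alpha> \<beta> x * ?D = (\<alpha>\<^sup>2 - \<beta>\<^sup>2) * (x + (\<alpha> + \<beta>) - 2 * real N - 1) * (4 * (x - 3))"
    unfolding G1_def by (rule scale[OF nz(3)]) (unfold sq, algebra)
  moreover have "G2 N \<alpha> \<beta> x * ?D = (2 * real N + 2 - (\<alpha> + \<beta>)) * ((x + \<alpha> - 1)\<^sup>2 - \<beta>\<^sup>2) * (4 * (x + 3))"
    unfolding G2_def by (rule scale[OF nz(4)]) (unfold sq, algebra)
  moreover have "hahnH N \<alpha> \<beta> f x * ?D = E1 N \<alpha> \<beta> x * ?D * (f (x + 4) - f x) + E2 N \<alpha> \<beta> x * ?D * (f (x - 4) - f x)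
     + G1 N \<alpha> \<beta> x * ?D * (f (- x - 2) - f x) + G2 N \<alpha> \<beta> x * ?D * (f (- x + 2) - f x)"
    unfolding hahnH_def by algebra
  ultimately show ?thesis
    by algebra
qed

section \<open>Coefficient vectors with respect to the polynomials\<close>

lemma finite_nonzero_add:
  fixes f g :: "'a \<Rightarrow> 'b :: comm_monoid_add"
  assumes "finite {i. f i \<noteq> 0}" and "finite {i. g i \<noteq> 0}"
  shows "finite {i. f i + g i \<noteq> 0}"
  by (rule finite_subset[of _ "{i. f i \<noteq> 0} \<union> {i. g i \<noteq> 0}"]) (use assms in auto)

locale dual_minus_one_hahn =
  fixes N :: nat and \<alpha> \<beta> :: real
begin

text \<open>
  The coefficients \<open>hb\<close> and \<open>hu\<close> at integer indices, given by the same formulas for negative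
  indices, so that the entrywise identities below hold uniformly in the index.
\<close>

definition bn :: "int \<Rightarrow> real" where
  "bn i = (if even i then 2 * real N + 1 - (\<alpha> + \<beta>) else - 2 * real N - 3 + (\<alpha> + \<beta>))"

definition un :: "int \<Rightarrow> real" where
  "un i = (if even i then 4 * of_int i * (\<alpha> - of_int i)
          else 4 * (real N - of_int i + 1) * (of_int i + \<beta> - real N - 1))"

lemma un_0 [simp]: "un 0 = 0"
  by (simp add: un_def)

definition P :: "int \<Rightarrow> real \<Rightarrow> real" where
  "P i = (if i < 0 then (\<lambda>_. 0) else poly (hahnP N \<alpha> \<beta> (nat i)))"

lemma P_int [simp]: "P (int n) = poly (hahnP N \<alpha> \<beta> n)"
  by (simp add: P_def)

lemma x_times_P:
  assumes "0 \<le> i"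
  shows "x * P i x = P (i + 1) x + bn i * P i x + un i * P (i - 1) x"
proof -
  obtain n where i: "i = int n"
    using assms nonneg_eq_int by blast
  show ?thesis
  proof (cases n)
    case 0
    then show ?thesis
      using i by (simp add: P_def hb_def bn_def)
  next
    case (Suc k)
    then have "i + 1 = int (Suc (Suc k))" "i = int (Suc k)" "i - 1 = int k"
      using i by simp_all
    moreover have "bn (int (Suc k)) = hb N \<alpha> \<beta> (Suc k)" "un (int (Suc k)) = hu N \<alpha> \<beta> (Suc k)"
      by (simp_all add: bn_def hb_def un_def hu_def)
    ultimately show ?thesis
      by (simp only: P_int) (simp add: algebra_simps)
  qed
qed

definition jacobi :: "(int \<Rightarrow> real) \<Rightarrow> int \<Rightarrow> real" where
  "jacobi v i = v (i - 1) + bn i * v i + un (i + 1) * v (i + 1)"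

definition diag :: "(int \<Rightarrow> real) \<Rightarrow> int \<Rightarrow> real" where
  "diag v i = 2 * of_int i * v i"

definition unit :: "int \<Rightarrow> int \<Rightarrow> real" where
  "unit m i = (if i = m then 1 else 0)"

definition supp :: "(int \<Rightarrow> real) \<Rightarrow> int set" where
  "supp v = {i. v i \<noteq> 0}"

text \<open>\<open>Sum_any\<close> is 0 on vectors of infinite support; all vectors used below have finite support.\<close>

definition expand :: "(int \<Rightarrow> real) \<Rightarrow> real \<Rightarrow> real" where
  "expand v x = Sum_any (\<lambda>i. v i * P i x)"

lemma zero_outside_supp: "supp v \<subseteq> A \<Longrightarrow> i \<notin> A \<Longrightarrow> v i = 0"
  by (auto simp: supp_def)

lemma supp_unit [simp]: "supp (unit m) = {m}"
  by (auto simp: supp_def unit_def)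

lemma supp_diag: "supp (diag v) \<subseteq> supp v"
  by (auto simp: supp_def diag_def)

lemma supp_jacobi:
  assumes "supp v \<subseteq> {lo..hi}"
  shows "supp (jacobi v) \<subseteq> {lo - 1..hi + 1}"
proof
  fix i assume "i \<in> supp (jacobi v)"
  then have "v (i - 1) \<noteq> 0 \<or> v i \<noteq> 0 \<or> v (i + 1) \<noteq> 0"
    by (auto simp: supp_def jacobi_def)
  then show "i \<in> {lo - 1..hi + 1}"
    using assms by (auto simp: supp_def subset_iff)
qed

lemma supp_jacobi_nonneg:
  assumes "supp v \<subseteq> {0..}"
  shows "supp (jacobi v) \<subseteq> {0..}"
proof
  fix i assume "i \<in> supp (jacobi v)"
  then have "v (i - 1) \<noteq> 0 \<or> v i \<noteq> 0 \<or> (i \<noteq> -1 \<and> v (i + 1) \<noteq> 0)"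
    by (auto simp: supp_def jacobi_def)
  then show "i \<in> {0..}"
    using assms by (auto simp: supp_def subset_iff)
qed

lemma supp_jacobi_power:
  "supp v \<subseteq> {lo..hi} \<Longrightarrow> supp ((jacobi ^^ k) v) \<subseteq> {lo - int k..hi + int k}"
proof (induction k)
  case (Suc k)
  then show ?case
    using supp_jacobi[OF Suc.IH] by (simp add: algebra_simps)
qed simp

lemma supp_jacobi_power_nonneg: "supp v \<subseteq> {0..} \<Longrightarrow> supp ((jacobi ^^ k) v) \<subseteq> {0..}"
  by (induction k) (simp_all add: supp_jacobi_nonneg)

lemma supp_jacobi_power_unit: "supp ((jacobi ^^ k) (unit m)) \<subseteq> {m - int k..m + int k}"
  by (rule supp_jacobi_power) simp

lemma supp_jacobi_power_unit_nonneg: "0 \<le> m \<Longrightarrow> supp ((jacobi ^^ k) (unit m)) \<subseteq> {0..}"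
  by (rule supp_jacobi_power_nonneg) simp

lemma supp_quintic_term:
  "supp ((jacobi ^^ a) (diag ((jacobi ^^ b) (unit m)))) \<subseteq> {m - int (a + b)..m + int (a + b)}"
proof -
  have "supp (diag ((jacobi ^^ b) (unit m))) \<subseteq> {m - int b..m + int b}"
    using supp_diag supp_jacobi_power_unit by (rule subset_trans)
  from supp_jacobi_power[OF this, of a] show ?thesis
    by (simp add: algebra_simps)
qed

lemma jacobi_power_unit_top: "(jacobi ^^ k) (unit m) (m + int k) = 1"
proof (induction k)
  case (Suc k)
  define g where "g = (jacobi ^^ k) (unit m)"
  have "supp g \<subseteq> {m - int k..m + int k}"
    unfolding g_def by (rule supp_jacobi_power_unit)
  then have "g (m + int k + 1) = 0" "g (m + int k + 2) = 0"
    using zero_outside_supp by simp_all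
  then have "jacobi g (m + int (Suc k)) = g (m + int k)"
    unfolding jacobi_def by (simp add: ac_simps)
  then show ?case
    using Suc.IH by (simp add: g_def)
qed (simp add: unit_def)

lemma expand_window:
  assumes "finite W" and "supp v \<subseteq> W"
  shows "expand v x = (\<Sum>i\<in>W. v i * P i x)"
  unfolding expand_def using assms by (intro Sum_any.expand_superset) (auto simp: supp_def)

lemma expand_unit [simp]: "expand (unit m) x = P m x"
  by (simp add: expand_window[of "{m}"] unit_def)

lemma expand_update:
  assumes "finite (supp w)" and "w n = 0"
  shows "expand (w(n := c)) y = c * P n y + expand w y"
proof -
  have "(\<lambda>i. (w(n := c)) i * P i y) = (\<lambda>i. w i * P i y)(n := c * P n y)"
    by (simp add: fun_eq_iff)
  moreover have "finite {i. w i * P i y \<noteq> 0}"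
    using assms(1) by (rule finite_subset[rotated]) (auto simp: supp_def)
  ultimately show ?thesis
    unfolding expand_def using assms(2) by (simp only: Sum_any.update)
qed

lemma diag_update: "diag (w(n := c)) = (diag w)(n := 2 * of_int n * c)"
  by (simp add: fun_eq_iff diag_def)

lemma expand_jacobi:
  assumes fin: "finite (supp v)" and nonneg: "supp v \<subseteq> {0..}"
  shows "expand (jacobi v) x = x * expand v x"
proof -
  have fin_shift: "finite {i. v (i + k) * c i \<noteq> 0}" for k c
    by (rule finite_subset[OF _ finite_vimageI[OF fin, of "\<lambda>i. i + k"]]) (auto simp: supp_def inj_on_def)
  have fin_terms: "finite {i. v (i - 1) * c i \<noteq> 0}" "finite {i. v i * c i \<noteq> 0}"
    "finite {i. v (i + 1) * c i \<noteq> 0}" for c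
    using fin_shift[of "-1" c] fin_shift[of 0 c] fin_shift[of 1 c] by simp_all
  have down: "Sum_any (\<lambda>i. v (i - 1) * P i x) = Sum_any (\<lambda>i. v i * P (i + 1) x)"
    by (rule Sum_any.reindex_cong[where l = "\<lambda>i. i + 1"]) (simp_all add: bij_plus_right fun_eq_iff)
  have up: "Sum_any (\<lambda>i. v (i + 1) * (un (i + 1) * P i x)) = Sum_any (\<lambda>i. v i * (un i * P (i - 1) x))"
    by (rule Sum_any.reindex_cong[where l = "\<lambda>i. i - 1"]) (simp_all add: bij_diff_right fun_eq_iff)
  have "expand (jacobi v) x = Sum_any (\<lambda>i. v (i - 1) * P i x) + Sum_any (\<lambda>i. v i * (bn i * P i x))
      + Sum_any (\<lambda>i. v (i + 1) * (un (i + 1) * P i x))"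
    unfolding expand_def jacobi_def distrib_right
    by (simp add: mult.assoc mult.left_commute[of "un _"] mult.left_commute[of "bn _"]
        Sum_any.distrib finite_nonzero_add fin_terms del: mult_eq_0_iff)
  also have "\<dots> = Sum_any (\<lambda>i. v i * (P (i + 1) x + bn i * P i x + un i * P (i - 1) x))"
    unfolding down up distrib_left
    by (simp add: Sum_any.distrib finite_nonzero_add fin_terms del: mult_eq_0_iff)
  also have "\<dots> = Sum_any (\<lambda>i. x * (v i * P i x))"
  proof (rule Sum_any.cong)
    fix i
    show "v i * (P (i + 1) x + bn i * P i x + un i * P (i - 1) x) = x * (v i * P i x)"
    proof (cases "v i = 0")
      case False
      then have "0 \<le> i"
        using nonneg by (auto simp: supp_def)
      then show ?thesis
        by (simp add: x_times_P)
    qed simp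
  qed
  also have "\<dots> = x * expand v x"
    unfolding expand_def by (rule Sum_any_right_distrib[symmetric]) (rule fin_terms)
  finally show ?thesis .
qed

lemma expand_jacobi_power:
  assumes "supp v \<subseteq> {lo..hi}" and "supp v \<subseteq> {0..}"
  shows "expand ((jacobi ^^ k) v) x = x ^ k * expand v x"
proof (induction k)
  case (Suc k)
  have "finite (supp ((jacobi ^^ k) v))"
    using supp_jacobi_power[OF assms(1)] by (rule finite_subset) simp
  then show ?case
    using Suc.IH supp_jacobi_power_nonneg[OF assms(2)] by (simp add: expand_jacobi)
qed simp

lemma expand_jacobi_power_unit: "0 \<le> m \<Longrightarrow> expand ((jacobi ^^ k) (unit m)) x = x ^ k * P m x"
  by (simp add: expand_jacobi_power[of _ m m])

text \<open>
  The parity of \<open>m\<close> fixes the parity of every index involved, after which the entry is a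
  polynomial identity in \<open>m\<close>, \<open>N\<close>, \<open>\<alpha>\<close> and \<open>\<beta>\<close>.
\<close>

lemma quintic_form_jacobi_unit_near_even:
  assumes "even m" and "\<bar>d\<bar> \<le> 5"
  shows "quintic_form jacobi diag (unit m) (m + d) = 0"
proof -
  have "d = -5 \<or> d = -4 \<or> d = -3 \<or> d = -2 \<or> d = -1 \<or> d = 0 \<or> d = 1 \<or> d = 2 \<or> d = 3 \<or> d = 4 \<or> d = 5"
    using assms(2) by presburger
  then show ?thesis
    using assms(1)
    by - (elim disjE; simp add: quintic_form_def quintic_lower_def jacobi_def diag_def unit_def
        bn_def un_def numeral_eq_Suc; (thin_tac "d = _")?; (thin_tac "even m")?; algebra)
qed

lemma quintic_form_jacobi_unit_near_odd:
  assumes "odd m" and "\<bar>d\<bar> \<le> 5"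
  shows "quintic_form jacobi diag (unit m) (m + d) = 0"
proof -
  have "d = -5 \<or> d = -4 \<or> d = -3 \<or> d = -2 \<or> d = -1 \<or> d = 0 \<or> d = 1 \<or> d = 2 \<or> d = 3 \<or> d = 4 \<or> d = 5"
    using assms(2) by presburger
  then show ?thesis
    using assms(1)
    by - (elim disjE; simp add: quintic_form_def quintic_lower_def jacobi_def diag_def unit_def
        bn_def un_def numeral_eq_Suc; (thin_tac "d = _")?; (thin_tac "odd m")?; algebra)
qed

lemma quintic_form_jacobi_unit: "quintic_form jacobi diag (unit m) i = 0"
proof (cases "\<bar>i - m\<bar> \<le> 5")
  case True
  then show ?thesis
    using quintic_form_jacobi_unit_near_even[of m "i - m"] quintic_form_jacobi_unit_near_odd[of m "i - m"]
    by (cases "even m") simp_all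
next
  case False
  have zero: "(jacobi ^^ a) (diag ((jacobi ^^ b) (unit m))) i = 0" if "a + b \<le> 5" for a b
    using that False by (intro zero_outside_supp[OF supp_quintic_term]) auto
  have "(\<Sum>(c, a, b)\<leftarrow>quintic_lower. c * (jacobi ^^ a) (diag ((jacobi ^^ b) (unit m))) i)
      = (\<Sum>t\<leftarrow>quintic_lower. 0)"
    by (intro arg_cong[where f = sum_list] map_cong) (auto dest: quintic_lower_degrees simp: zero)
  then show ?thesis
    using zero[of 0 5] by (simp add: quintic_form_def)
qed

section \<open>The eigenvalue equation\<close>

lemma hahnH_P_eigen_low:
  assumes x: "x \<notin> {1, -1, 3, -3}" and "0 \<le> i" "i \<le> 4"
  shows "hahnH N \<alpha> \<beta> (P i) x = 2 * of_int i * P i x"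
proof -
  have P: "P 0 y = 1" "P 1 y = y - bn 0" "P 2 y = (y - bn 1) * P 1 y - un 1 * P 0 y"
    "P 3 y = (y - bn 2) * P 2 y - un 2 * P 1 y" "P 4 y = (y - bn 3) * P 3 y - un 3 * P 2 y" for y
    using x_times_P[of 0 y] x_times_P[of 1 y] x_times_P[of 2 y] x_times_P[of 3 y]
    by (simp_all add: P_def algebra_simps)
  have "i = 0 \<or> i = 1 \<or> i = 2 \<or> i = 3 \<or> i = 4"
    using assms(2,3) by presburger
  then have "hahnH N \<alpha> \<beta> (P i) x * (4 * (x + 1) * (x - 1) * (x + 3) * (x - 3))
      = 2 * of_int i * P i x * (4 * (x + 1) * (x - 1) * (x + 3) * (x - 3))"
    apply (elim disjE; hypsubst_thin)
        apply (simp_all only: hahnH_times_denominator[OF x] P)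
        apply (simp_all add: bn_def un_def)
      apply algebra+
    done
  moreover have "4 * (x + 1) * (x - 1) * (x + 3) * (x - 3) \<noteq> 0"
    using x by auto
  ultimately show ?thesis
    by simp
qed

lemma hahnH_expand_eq_expand_diag:
  assumes fin: "finite (supp v)"
    and eigen: "\<And>i. i \<in> supp v \<Longrightarrow> hahnH N \<alpha> \<beta> (P i) x = 2 * of_int i * P i x"
  shows "hahnH N \<alpha> \<beta> (expand v) x = expand (diag v) x"
proof -
  have "expand v = (\<lambda>y. \<Sum>i\<in>supp v. v i * P i y)"
    using expand_window[OF fin] by auto
  then have "hahnH N \<alpha> \<beta> (expand v) x = (\<Sum>i\<in>supp v. v i * hahnH N \<alpha> \<beta> (P i) x)"
    by (simp add: hahnH_lincomb)
  also have "\<dots> = (\<Sum>i\<in>supp v. diag v i * P i x)"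
    using eigen by (intro sum.cong) (simp_all add: diag_def)
  also have "\<dots> = expand (diag v) x"
    using expand_window[OF fin supp_diag] by simp
  finally show ?thesis .
qed

lemma hahnH_power5_P:
  assumes m: "0 \<le> m"
    and lower: "\<And>k. k \<le> 4 \<Longrightarrow> hahnH N \<alpha> \<beta> (\<lambda>y. y ^ k * P m y) x = expand (diag ((jacobi ^^ k) (unit m))) x"
  shows "hahnH N \<alpha> \<beta> (\<lambda>y. y ^ 5 * P m y) x = expand (diag ((jacobi ^^ 5) (unit m))) x"
proof -
  let ?t = "\<lambda>a b. (jacobi ^^ a) (diag ((jacobi ^^ b) (unit m)))"
  let ?W = "{m - 5..m + 5}"
  have window: "expand (?t a b) x = (\<Sum>i\<in>?W. ?t a b i * P i x)" if "a + b \<le> 5" for a b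
    using supp_quintic_term[of a b m] that by (intro expand_window) auto
  have monomial: "x ^ a * hahnH N \<alpha> \<beta> (\<lambda>y. y ^ b * P m y) x = (\<Sum>i\<in>?W. ?t a b i * P i x)"
    if "b \<le> 4" "a + b \<le> 5" for a b
  proof -
    have "supp (diag ((jacobi ^^ b) (unit m))) \<subseteq> {m - int b..m + int b}"
      using supp_diag supp_jacobi_power_unit by (rule subset_trans)
    moreover have "supp (diag ((jacobi ^^ b) (unit m))) \<subseteq> {0..}"
      using supp_diag supp_jacobi_power_unit_nonneg[OF m] by (rule subset_trans)
    ultimately have "x ^ a * expand (diag ((jacobi ^^ b) (unit m))) x = expand (?t a b) x"
      by (simp add: expand_jacobi_power)
    then show ?thesis
      using that by (simp add: lower window)
  qed
  have "hahnH N \<alpha> \<beta> (\<lambda>y. y ^ 5 * P m y) x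
      = - (\<Sum>(c, a, b)\<leftarrow>quintic_lower. c * x ^ a * hahnH N \<alpha> \<beta> (\<lambda>y. y ^ b * P m y) x)"
    using quintic_form_hahnH[of N \<alpha> \<beta> "P m" x] by (simp add: quintic_form_times_x eq_neg_iff_add_eq_0)
  also have "\<dots> = - (\<Sum>(c, a, b)\<leftarrow>quintic_lower. c * (\<Sum>i\<in>?W. ?t a b i * P i x))"
    by (intro arg_cong[where f = uminus] arg_cong[where f = sum_list] map_cong)
      (auto simp: mult.assoc monomial dest: quintic_lower_degrees)
  also have "\<dots> = (\<Sum>i\<in>?W. diag ((jacobi ^^ 5) (unit m)) i * P i x)"
  proof -
    have "diag ((jacobi ^^ 5) (unit m)) i = - (\<Sum>(c, a, b)\<leftarrow>quintic_lower. c * ?t a b i)" for i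
      using quintic_form_jacobi_unit[of m i] by (simp add: quintic_form_def add_eq_0_iff2)
    then show ?thesis
      by (simp add: sum_mult_sum_list_swap sum_negf)
  qed
  also have "\<dots> = expand (diag ((jacobi ^^ 5) (unit m))) x"
    using window[of 0 5] by simp
  finally show ?thesis .
qed

lemma hahnH_P_eigen_step:
  assumes m: "0 \<le> m"
    and eigen: "\<And>i. 0 \<le> i \<Longrightarrow> i < m + 5 \<Longrightarrow> hahnH N \<alpha> \<beta> (P i) x = 2 * of_int i * P i x"
  shows "hahnH N \<alpha> \<beta> (P (m + 5)) x = 2 * of_int (m + 5) * P (m + 5) x"
proof -
  let ?v = "(jacobi ^^ 5) (unit m)"
  have below: "hahnH N \<alpha> \<beta> (expand w) x = expand (diag w) x" if "supp w \<subseteq> {0..m + 4}" for w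
    using that by (intro hahnH_expand_eq_expand_diag eigen) (auto intro: finite_subset)
  have "hahnH N \<alpha> \<beta> (\<lambda>y. y ^ k * P m y) x = expand (diag ((jacobi ^^ k) (unit m))) x" if "k \<le> 4" for k
  proof -
    have "(\<lambda>y. y ^ k * P m y) = expand ((jacobi ^^ k) (unit m))"
      using expand_jacobi_power_unit[OF m] by (simp add: fun_eq_iff)
    moreover have "supp ((jacobi ^^ k) (unit m)) \<subseteq> {0..m + 4}"
      using supp_jacobi_power_unit[of k m] supp_jacobi_power_unit_nonneg[OF m, of k] that by force
    ultimately show ?thesis
      by (simp add: below)
  qed
  then have top: "hahnH N \<alpha> \<beta> (\<lambda>y. y ^ 5 * P m y) x = expand (diag ?v) x"
    by (rule hahnH_power5_P[OF m])
  \<comment> \<open>\<open>?v\<close> has entry 1 at \<open>m + 5\<close>, so \<open>x\<^sup>5 P\<^sub>m = P\<^sub>m\<^sub>+\<^sub>5 + expand w\<close> with \<open>w\<close> supported below \<open>m + 5\<close>.\<close>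
  define w where "w = ?v(m + 5 := 0)"
  have v: "?v = w(m + 5 := 1)" and w_top: "w (m + 5) = 0"
    using jacobi_power_unit_top[of 5 m] by (auto simp: w_def fun_eq_iff)
  have supp_w: "supp w \<subseteq> {0..m + 4}"
  proof
    fix i assume "i \<in> supp w"
    then have "i \<noteq> m + 5" "i \<in> supp ?v"
      by (auto simp: w_def supp_def split: if_splits)
    then show "i \<in> {0..m + 4}"
      using supp_jacobi_power_unit[of 5 m] supp_jacobi_power_unit_nonneg[OF m, of 5] by auto
  qed
  then have fin_w: "finite (supp w)" "finite (supp (diag w))"
    using supp_diag[of w] by (auto intro: finite_subset)
  have "P (m + 5) = (\<lambda>y. y ^ 5 * P m y - expand w y)"
    using expand_jacobi_power_unit[OF m, of 5] by (simp add: fun_eq_iff v expand_update fin_w w_top eq_diff_eq)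
  then have "hahnH N \<alpha> \<beta> (P (m + 5)) x = expand (diag ?v) x - expand (diag w) x"
    using top below[OF supp_w] by (simp add: hahnH_diff)
  also have "\<dots> = 2 * of_int (m + 5) * P (m + 5) x"
    unfolding v diag_update using fin_w w_top by (simp add: expand_update diag_def)
  finally show ?thesis .
qed

lemma hahnH_hahnP_eigen:
  assumes x: "x \<notin> {1, -1, 3, -3}"
  shows "hahnH N \<alpha> \<beta> (poly (hahnP N \<alpha> \<beta> n)) x = 2 * real n * poly (hahnP N \<alpha> \<beta> n) x"
proof (induction n rule: less_induct)
  case (less n)
  show ?case
  proof (cases "n \<le> 4")
    case True
    then show ?thesis
      using hahnH_P_eigen_low[OF x, of "int n"] by simp
  next
    case False
    then obtain m where n: "n = m + 5"
      using le_Suc_ex[of 5 n] by auto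
    have "hahnH N \<alpha> \<beta> (P (int m + 5)) x = 2 * of_int (int m + 5) * P (int m + 5) x"
    proof (rule hahnH_P_eigen_step)
      fix i :: int assume "0 \<le> i" "i < int m + 5"
      then show "hahnH N \<alpha> \<beta> (P i) x = 2 * of_int i * P i x"
        using less[of "nat i"] n by (simp add: P_def)
    qed simp
    then show ?thesis
      using P_int[of n] by (simp add: n add.commute)
  qed
qed

end

text \<open>The identity holds for every \<open>n\<close>.\<close>

theorem mainTheorem7:
  fixes N n :: nat and \<alpha> \<beta> x :: real
  assumes "N > 0" and "even N" and "n \<le> N"
    and "x \<notin> {1, -1, 3, -3}"
  shows "hahnH N \<alpha> \<beta> (poly (hahnP N \<alpha> \<beta> n)) x = 2 * real n * poly (hahnP N \<alpha> \<beta> n) x"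
  using dual_minus_one_hahn.hahnH_hahnP_eigen[OF assms(4)] .

end
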